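(* Let $(S,d)$ be a metric space with at least two points. If $f\in\operatorname{ext}_*(B^S_{\mathrm{BL}})$, then $\inf_{x\in S}f(x)=-\sup_{x\in S}f(x)$. In particular, if $S$ is compact, then $f$ attains both values $\|f\|_\infty$ and $-\|f\|_\infty$.
   Context: $\mathrm{BL}(S)$ is the space of bounded real-valued Lipschitz functions on $S$, $|f|_L=\sup_{x\neq y}|f(x)-f(y)|/d(x,y)$, $\|f\|_{\mathrm{BL}}=\|f\|_\infty+|f|_L$, $B^S_{\mathrm{BL}}=\{f\in\mathrm{BL}(S):\|f\|_{\mathrm{BL}}\le1\}$, $\operatorname{ext}$ denotes extreme points, and $\operatorname{ext}_*(B^S_{\mathrm{BL}})=\operatorname{ext}(B^S_{\mathrm{BL}})\setminus\{f\in B^S_{\mathrm{BL}}:|f|=\mathbf{1}\}$. *)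

theory Defs
  imports "HOL-Analysis.Analysis"
begin

definition sup_norm :: "('a \<Rightarrow> real) \<Rightarrow> real" where
  "sup_norm f = (SUP x. \<bar>f x\<bar>)"

definition lip_norm :: "('a::metric_space \<Rightarrow> real) \<Rightarrow> real" where
  "lip_norm f = (SUP p \<in> {(x,y). x \<noteq> y}. \<bar>f (fst p) - f (snd p)\<bar> / dist (fst p) (snd p))"

definition BL :: "('a::metric_space \<Rightarrow> real) set" where
  "BL = {f. bounded (range f) \<and> (\<exists>L. \<forall>x y. \<bar>f x - f y\<bar> \<le> L * dist x y)}"

definition bl_norm :: "('a::metric_space \<Rightarrow> real) \<Rightarrow> real" where
  "bl_norm f = sup_norm f + lip_norm f"

definition BL_ball :: "('a::metric_space \<Rightarrow> real) set" where
  "BL_ball = {f \<in> BL. bl_norm f \<le> 1}"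

definition ext :: "('a \<Rightarrow> real) set \<Rightarrow> ('a \<Rightarrow> real) set" where
  "ext B = {f \<in> B. \<forall>g\<in>B. \<forall>h\<in>B. \<forall>t::real. 0 < t \<and> t < 1 \<and>
              f = (\<lambda>x. t * g x + (1 - t) * h x) \<longrightarrow> g = h}"

definition ext_star :: "('a::metric_space \<Rightarrow> real) set" where
  "ext_star = ext BL_ball - {f \<in> BL_ball. (\<lambda>x. \<bar>f x\<bar>) = (\<lambda>_. 1)}"

end

theory Submission
  imports Defs
begin

text \<open>Let \<open>M = sup f\<close> and \<open>m = inf f\<close>, and suppose \<open>M + m > 0\<close> (the case \<open>M + m < 0\<close> is
  symmetric). For small \<open>l > 0\<close> the values of \<open>f - l\<close> lie in \<open>[m - l, M - l]\<close>, an interval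
  contained in \<open>[-(\<parallel>f\<parallel>\<^sub>\<infinity> - l), \<parallel>f\<parallel>\<^sub>\<infinity> - l]\<close>. Hence \<open>u = (f - l) / (1 - l)\<close> lies in the unit
  ball of \<open>BL(S)\<close>, and so does the constant \<open>1\<close>. Now \<open>f = (1 - l) u + l \<cdot> 1\<close> is a proper
  convex combination, so extremality forces \<open>u = 1\<close>, i.e. \<open>f = 1\<close>, which is excluded.\<close>

lemma sup_norm_le:
  assumes "\<And>x. \<bar>g x\<bar> \<le> A"
  shows "sup_norm g \<le> A"
  unfolding sup_norm_def by (rule cSUP_least) (auto intro: assms)

lemma lip_norm_le:
  fixes g :: "'a::metric_space \<Rightarrow> real"
  assumes two_points: "\<exists>x y::'a. x \<noteq> y" and "\<And>x y. \<bar>g x - g y\<bar> \<le> B * dist x y"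
  shows "lip_norm g \<le> B"
  unfolding lip_norm_def
proof (rule cSUP_least)
  show "{(x, y). x \<noteq> (y::'a)} \<noteq> {}" using two_points by auto
next
  fix p :: "'a \<times> 'a" assume "p \<in> {(x, y). x \<noteq> y}"
  then show "\<bar>g (fst p) - g (snd p)\<bar> / dist (fst p) (snd p) \<le> B"
    using assms(2)[of "fst p" "snd p"] by (auto simp: divide_le_eq)
qed

lemma BL_bdd_above: "f \<in> BL \<Longrightarrow> bdd_above (range f)"
  and BL_bdd_below: "f \<in> BL \<Longrightarrow> bdd_below (range f)"
  by (auto simp: BL_def intro: bounded_imp_bdd_above bounded_imp_bdd_below)

lemma BL_abs_le_sup_norm:
  assumes "f \<in> BL"
  shows "\<bar>f x\<bar> \<le> sup_norm f"
proof -
  obtain K where "\<And>x. \<bar>f x\<bar> \<le> K"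
    using assms by (auto simp: BL_def bounded_iff)
  then have "bdd_above (range (\<lambda>x. \<bar>f x\<bar>))" by (auto intro: bdd_aboveI[of _ K])
  then show ?thesis unfolding sup_norm_def by (rule cSUP_upper2) auto
qed

lemma BL_abs_diff_le_lip_norm:
  assumes "f \<in> BL"
  shows "\<bar>f x - f y\<bar> \<le> lip_norm f * dist x y"
proof (cases "x = y")
  case False
  from assms obtain L where L: "\<And>x y. \<bar>f x - f y\<bar> \<le> L * dist x y"
    unfolding BL_def by auto
  let ?q = "\<lambda>p. \<bar>f (fst p) - f (snd p)\<bar> / dist (fst p) (snd p)"
  have "bdd_above (?q ` {(x, y). x \<noteq> y})"
    using L by (intro bdd_aboveI[of _ L]) (auto simp: divide_le_eq)
  then have "\<bar>f x - f y\<bar> / dist x y \<le> lip_norm f"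
    unfolding lip_norm_def using False by (auto intro: cSUP_upper2[of _ _ "(x, y)"])
  then show ?thesis using False by (simp add: divide_le_eq)
qed simp

lemma BL_continuous_on:
  assumes "f \<in> BL"
  shows "continuous_on S f"
proof -
  from assms obtain L where L: "\<And>x y. \<bar>f x - f y\<bar> \<le> L * dist x y"
    unfolding BL_def by auto
  have "\<bar>f x - f y\<bar> \<le> max 0 L * dist x y" for x y
    using L[of x y] mult_right_mono[of L "max 0 L" "dist x y"] by simp
  then have "lipschitz_on (max 0 L) S f"
    by (auto simp: lipschitz_on_def dist_real_def)
  then show ?thesis by (rule lipschitz_on_continuous_on)
qed

lemma BL_sup_norm_eq:
  assumes "f \<in> BL"
  shows "sup_norm f = max (SUP x. f x) (- (INF x. f x))"
proof (rule antisym)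
  have "f x \<le> (SUP x. f x)" "(INF x. f x) \<le> f x" for x
    using assms by (auto intro: cSUP_upper cINF_lower BL_bdd_above BL_bdd_below)
  then show "sup_norm f \<le> max (SUP x. f x) (- (INF x. f x))"
    by (intro sup_norm_le abs_leI) (auto simp: le_max_iff_disj)
next
  have "(SUP x. f x) \<le> sup_norm f" "- sup_norm f \<le> (INF x. f x)"
    using BL_abs_le_sup_norm[OF assms] by (auto intro!: cSUP_least cINF_greatest simp: abs_le_iff minus_le_iff)
  then show "max (SUP x. f x) (- (INF x. f x)) \<le> sup_norm f" by simp
qed

lemma const_mem_BL_ball:
  assumes two_points: "\<exists>x y::'a::metric_space. x \<noteq> y" and "\<bar>s\<bar> \<le> 1"
  shows "(\<lambda>_::'a. s) \<in> BL_ball"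
proof -
  have "bl_norm (\<lambda>_::'a. s) \<le> 1 + 0"
    unfolding bl_norm_def using assms
    by (intro add_mono sup_norm_le lip_norm_le[OF two_points]) auto
  then show ?thesis by (auto simp: BL_ball_def BL_def intro: exI[of _ 0])
qed

lemma rescaled_mem_BL_ball:
  fixes f :: "'a::metric_space \<Rightarrow> real"
  assumes two_points: "\<exists>x y::'a. x \<noteq> y" and "f \<in> BL_ball" and l: "0 < l" "l < 1"
    and bound: "\<And>x. \<bar>f x - c\<bar> \<le> sup_norm f - l"
  shows "(\<lambda>x. (f x - c) / (1 - l)) \<in> BL_ball"
proof -
  let ?u = "\<lambda>x. (f x - c) / (1 - l)"
  have f: "f \<in> BL" and norm_f: "sup_norm f + lip_norm f \<le> 1"
    using assms(2) by (auto simp: BL_ball_def bl_norm_def)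
  have sup_u: "\<bar>?u x\<bar> \<le> (sup_norm f - l) / (1 - l)" for x
    using bound[of x] l by (simp add: divide_right_mono)
  have lip_u: "\<bar>?u x - ?u y\<bar> \<le> lip_norm f / (1 - l) * dist x y" for x y
  proof -
    have "\<bar>?u x - ?u y\<bar> = \<bar>f x - f y\<bar> / (1 - l)"
      using l by (simp add: diff_divide_distrib[symmetric])
    also have "\<dots> \<le> lip_norm f * dist x y / (1 - l)"
      using BL_abs_diff_le_lip_norm[OF f] l by (simp add: divide_right_mono)
    finally show ?thesis by simp
  qed
  have "?u \<in> BL"
    unfolding BL_def using sup_u lip_u by (auto simp: bounded_iff intro: exI[of _ "lip_norm f / (1 - l)"])
  moreover have "bl_norm ?u \<le> (sup_norm f - l) / (1 - l) + lip_norm f / (1 - l)"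
    unfolding bl_norm_def by (intro add_mono sup_norm_le[OF sup_u] lip_norm_le[OF two_points lip_u])
  moreover have "\<dots> \<le> 1"
    using norm_f l by (simp add: add_divide_distrib[symmetric])
  ultimately show ?thesis by (simp add: BL_ball_def)
qed

lemma ext_BL_ball_eq_const:
  fixes f :: "'a::metric_space \<Rightarrow> real"
  assumes two_points: "\<exists>x y::'a. x \<noteq> y" and f: "f \<in> ext BL_ball"
    and s: "\<bar>s\<bar> \<le> 1" and l: "0 < l" "l < 1"
    and bound: "\<And>x. \<bar>f x - s * l\<bar> \<le> sup_norm f - l"
  shows "f = (\<lambda>_. s)"
proof -
  let ?u = "\<lambda>x. (f x - s * l) / (1 - l)"
  have extremal: "\<forall>g\<in>BL_ball. \<forall>h\<in>BL_ball. \<forall>t::real. 0 < t \<and> t < 1 \<and>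
      f = (\<lambda>x. t * g x + (1 - t) * h x) \<longrightarrow> g = h" and "f \<in> BL_ball"
    using f by (auto simp: ext_def)
  have u: "?u \<in> BL_ball"
    using \<open>f \<in> BL_ball\<close> l bound by (rule rescaled_mem_BL_ball[OF two_points])
  have const: "(\<lambda>_::'a. s) \<in> BL_ball"
    using two_points s by (rule const_mem_BL_ball)
  have decomp: "f = (\<lambda>x. (1 - l) * ?u x + (1 - (1 - l)) * s)"
    using l by (auto simp: field_simps)
  have "?u = (\<lambda>_. s)"
    using extremal[rule_format, OF u const, of "1 - l"] l decomp by simp
  then show ?thesis
    using l by (auto simp: fun_eq_iff field_simps)
qed

lemma ext_BL_ball_eq_sgn:
  fixes f :: "'a::metric_space \<Rightarrow> real"
  assumes two_points: "\<exists>x y::'a. x \<noteq> y" and f: "f \<in> ext BL_ball"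
    and asym: "(INF x. f x) \<noteq> - (SUP x. f x)"
  shows "f = (\<lambda>_. sgn ((SUP x. f x) + (INF x. f x)))"
proof -
  define M where "M = (SUP x. f x)"
  define m where "m = (INF x. f x)"
  define s where "s = sgn (M + m)"
  define l where "l = min (\<bar>M + m\<bar> / 2) (1 / 2)"
  have "f \<in> BL" using f by (auto simp: ext_def BL_ball_def)
  then have range_f: "m \<le> f x" "f x \<le> M" for x
    unfolding M_def m_def by (auto intro: cSUP_upper cINF_lower BL_bdd_above BL_bdd_below)
  have norm_f: "M \<le> sup_norm f" "- m \<le> sup_norm f"
    using BL_sup_norm_eq[OF \<open>f \<in> BL\<close>] unfolding M_def m_def by auto
  have s: "s = 1 \<and> 0 < M + m \<or> s = -1 \<and> M + m < 0"
    using asym unfolding s_def M_def m_def by (auto simp: sgn_if)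
  have l: "0 < l" "l < 1" "2 * l \<le> \<bar>M + m\<bar>"
    using asym unfolding l_def M_def m_def by (auto simp: min_def)
  have bound: "\<bar>f x - s * l\<bar> \<le> sup_norm f - l" for x
    using s l range_f[of x] norm_f by (auto simp: abs_le_iff)
  have "f = (\<lambda>_. s)"
    by (rule ext_BL_ball_eq_const[OF two_points f _ l(1,2) bound]) (auto simp: s_def sgn_if)
  then show ?thesis unfolding s_def M_def m_def .
qed

lemma BL_attains_sup_norm:
  fixes f :: "'a::metric_space \<Rightarrow> real"
  assumes "compact (UNIV :: 'a set)" and f: "f \<in> BL"
    and sym: "(INF x. f x) = - (SUP x. f x)"
  shows "(\<exists>x. f x = sup_norm f) \<and> (\<exists>y. f y = - sup_norm f)"
proof -
  have cont: "continuous_on UNIV f" using f by (rule BL_continuous_on)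
  obtain a where a: "\<And>x. f x \<le> f a"
    using continuous_attains_sup[OF assms(1) _ cont] by auto
  obtain b where b: "\<And>x. f b \<le> f x"
    using continuous_attains_inf[OF assms(1) _ cont] by auto
  have "(SUP x. f x) = f a" "(INF x. f x) = f b"
    using a b by (auto intro!: antisym cSUP_least cINF_greatest cSUP_upper2 cINF_lower2
        BL_bdd_above BL_bdd_below f)
  moreover have "sup_norm f = (SUP x. f x)"
    using BL_sup_norm_eq[OF f] sym by simp
  ultimately show ?thesis using sym by metis
qed

theorem lemma3p4:
  fixes f :: "'a::metric_space \<Rightarrow> real"
  assumes two_points: "\<exists>x y::'a. x \<noteq> y"
    and f_ext: "f \<in> ext_star"
  shows "(INF x. f x) = - (SUP x. f x) \<and>
         (compact (UNIV :: 'a set) \<longrightarrow>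
           (\<exists>x. f x = sup_norm f) \<and> (\<exists>y. f y = - sup_norm f))"
proof -
  have f: "f \<in> ext BL_ball" and "f \<in> BL" and not_unimodular: "(\<lambda>x. \<bar>f x\<bar>) \<noteq> (\<lambda>_. 1)"
    using f_ext by (auto simp: ext_star_def ext_def BL_ball_def)
  have sym: "(INF x. f x) = - (SUP x. f x)"
  proof (rule ccontr)
    assume asym: "(INF x. f x) \<noteq> - (SUP x. f x)"
    then have "(\<lambda>x. \<bar>f x\<bar>) = (\<lambda>_. 1)"
      by (subst ext_BL_ball_eq_sgn[OF two_points f asym]) (auto simp: abs_sgn)
    with not_unimodular show False ..
  qed
  with \<open>f \<in> BL\<close> show ?thesis
    using BL_attains_sup_norm by blast
qed

end
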